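(* Let $\nu$ be a signature and let $\mathcal A\in\widetilde{\mathrm{Hinge}}_n$ be nondegenerate. Then $\rho_\nu(\mathcal A)\ne0$.
   Context: Let $V=\mathbb C^n$ with basis $e_1,\dots,e_n$. A linear relation is a subspace $P\subset V\oplus V$; $\mathrm{Ker}\,P=\{v: v\oplus0\in P\}$, $\mathrm{Dom}\,P,\mathrm{Im}\,P$ the projections to the first and second summands, $\mathrm{Indef}\,P=\{w:0\oplus w\in P\}$, $\mathrm{rk}\,P=\dim\mathrm{Dom}\,P-\dim\mathrm{Ker}\,P$. If $\dim P=n$, choose bases $f_1,\dots,f_a,g_1,\dots,g_b,h_1,\dots,h_c$ and $F_1,\dots,F_a,G_1,\dots,G_b,H_1,\dots,H_c$ of $V$ with $P$ spanned by $0\oplus F_i$, $g_j\oplus G_j$, $h_k\oplus0$; $\lambda(P)$ maps $f_1\wedge\dots\wedge f_a\wedge g_{i_1}\wedge\dots\wedge g_{i_s}$ to $F_1\wedge\dots\wedge F_a\wedge G_{i_1}\wedge\dots\wedge G_{i_s}$ and kills the other basis monomials (up to scalar); $\lambda^m(P)$ its restriction to $\Lambda^mV$. A hinge is a sequence $\mathcal P=(P_1,\dots,P_k)$ of $n$-dimensional relations with $\mathrm{Ker}\,P_j=\mathrm{Dom}\,P_{j+1}$, $\mathrm{Im}\,P_j=\mathrm{Indef}\,P_{j+1}$, $\mathrm{Dom}\,P_1=V$, $\mathrm{Im}\,P_k=V$, $\mathrm{rk}\,P_j>0$. For each $m$ there is a nonzero $\lambda^m(P_j)$, and any two nonzero ones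 are proportional; $\lambda^m(\mathcal P)$ denotes it (up to scalar). $\widetilde{\mathrm{Hinge}}_n$ is the set of tuples $\mathcal A=(c_0\lambda^0(\mathcal P),\dots,c_n\lambda^n(\mathcal P))$ with $\mathcal P$ a hinge and $c_j\in\mathbb C$; $\mathcal A$ is nondegenerate if all $c_j\ne0$. A signature is $\nu_1\ge\dots\ge\nu_n\ge0$ (integers), $\nu_{n+1}=0$; $\mathfrak H_\nu=\bigotimes_j(\Lambda^jV)^{\otimes(\nu_j-\nu_{j+1})}$; $\Xi_\nu=\bigotimes_j(e_1\wedge\dots\wedge e_j)^{\otimes(\nu_j-\nu_{j+1})}$; $\mathfrak r_\nu(A_0,\dots,A_n)=\bigotimes_jA_j^{\otimes(\nu_j-\nu_{j+1})}$; $H_\nu$ is the span of $\mathfrak r_\nu(\lambda^0_{\mathrm{cha}}(g),\dots,\lambda^n_{\mathrm{cha}}(g))\Xi_\nu$, $g\in\mathrm{GL}_n(\mathbb C)$, where $\lambda^j_{\mathrm{cha}}(g)v_1\wedge\dots\wedge v_j=gv_1\wedge\dots\wedge gv_j$; $H_\nu$ is invariant under $\mathfrak r_\nu(\mathcal A)$ for $\mathcal A\in\widetilde{\mathrm{Hinge}}_n$, and $\rho_\nu(\mathcal A)$ is the restriction of $\mathfrak r_\nu(\mathcal A)$ to $H_\nu$. *)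

theory Defs
  imports "Jordan_Normal_Form.Determinant" "HOL-Library.Function_Algebras" "HOL-Library.Product_Plus"
begin

definition Vsp :: "nat \<Rightarrow> (nat \<Rightarrow> complex) set" where
  "Vsp n = {v. \<forall>i\<ge>n. v i = 0}"

definition scl :: "complex \<Rightarrow> (nat \<Rightarrow> complex) \<Rightarrow> (nat \<Rightarrow> complex)" where
  "scl c v = (\<lambda>i. c * v i)"

definition sclp :: "complex \<Rightarrow> (nat \<Rightarrow> complex) \<times> (nat \<Rightarrow> complex) \<Rightarrow> (nat \<Rightarrow> complex) \<times> (nat \<Rightarrow> complex)" where
  "sclp c p = (scl c (fst p), scl c (snd p))"

definition is_basis :: "nat \<Rightarrow> (nat \<Rightarrow> nat \<Rightarrow> complex) \<Rightarrow> bool" where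
  "is_basis n B \<longleftrightarrow> inj_on B {..<n} \<and> \<not> module.dependent scl (B ` {..<n})
     \<and> module.span scl (B ` {..<n}) = Vsp n"

type_synonym linrel = "((nat \<Rightarrow> complex) \<times> (nat \<Rightarrow> complex)) set"

definition Ker :: "linrel \<Rightarrow> (nat \<Rightarrow> complex) set" where "Ker P = {v. (v, 0) \<in> P}"
definition Dom :: "linrel \<Rightarrow> (nat \<Rightarrow> complex) set" where "Dom P = fst ` P"
definition Im :: "linrel \<Rightarrow> (nat \<Rightarrow> complex) set" where "Im P = snd ` P"
definition Indef :: "linrel \<Rightarrow> (nat \<Rightarrow> complex) set" where "Indef P = {w. (0, w) \<in> P}"

definition rk :: "linrel \<Rightarrow> nat" where
  "rk P = vector_space.dim scl (Dom P) - vector_space.dim scl (Ker P)"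

definition ndim_rel :: "nat \<Rightarrow> linrel \<Rightarrow> bool" where
  "ndim_rel n P \<longleftrightarrow> P \<subseteq> Vsp n \<times> Vsp n \<and> module.subspace sclp P \<and> vector_space.dim sclp P = n"

text \<open>Lambda^m V has basis e_I, I an m-subset of {..<n}; vectors are functions on index sets,
  operators are matrices indexed by pairs of m-subsets.\<close>
definition msub :: "nat \<Rightarrow> nat \<Rightarrow> nat set set" where
  "msub n m = {I. I \<subseteq> {..<n} \<and> card I = m}"

text \<open>coordinates of the wedge of B s_1, ..., B s_m (s_1 < ... < s_m the elements of S)
  in the basis e_I (I = {i_1 < ... < i_m})\<close>
definition wedge :: "(nat \<Rightarrow> nat \<Rightarrow> complex) \<Rightarrow> nat set \<Rightarrow> nat set \<Rightarrow> complex" where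
  "wedge B S I = det (mat (card S) (card S)
      (\<lambda>(r, c). B (sorted_list_of_set S ! c) (sorted_list_of_set I ! r)))"

definition opapp :: "nat \<Rightarrow> nat \<Rightarrow> (nat set \<Rightarrow> nat set \<Rightarrow> complex) \<Rightarrow> (nat set \<Rightarrow> complex) \<Rightarrow> nat set \<Rightarrow> complex" where
  "opapp n m L x I = (\<Sum>J\<in>msub n m. L I J * x J)"

definition op_nonzero :: "nat \<Rightarrow> nat \<Rightarrow> (nat set \<Rightarrow> nat set \<Rightarrow> complex) \<Rightarrow> bool" where
  "op_nonzero n m L \<longleftrightarrow> (\<exists>I\<in>msub n m. \<exists>J\<in>msub n m. L I J \<noteq> 0)"

text \<open>L is (a choice of) lambda^m(P): bases f = B 0..B (a-1), g = B a..B (a+b-1), h = the rest,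
  F,G,H likewise from C; P spanned by 0(+)F_i, g_j(+)G_j, h_k(+)0; monomials in f,g,h with
  index set S go to the corresponding monomial in F,G,H if S contains all f's and no h,
  and are killed otherwise.\<close>
definition lam_rel :: "nat \<Rightarrow> nat \<Rightarrow> linrel \<Rightarrow> (nat set \<Rightarrow> nat set \<Rightarrow> complex) \<Rightarrow> bool" where
  "lam_rel n m P L \<longleftrightarrow> (\<exists>a b B C. a + b \<le> n \<and> is_basis n B \<and> is_basis n C \<and>
     P = module.span sclp ((\<lambda>i. (0, C i)) ` {..<a} \<union> (\<lambda>j. (B j, C j)) ` {a..<a+b}
                            \<union> (\<lambda>k. (B k, 0)) ` {a+b..<n}) \<and>
     (\<forall>S\<in>msub n m. \<forall>I\<in>msub n m.
        opapp n m L (wedge B S) I = (if {..<a} \<subseteq> S \<and> S \<subseteq> {..<a+b} then wedge C S I else 0)))"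

definition hinge :: "nat \<Rightarrow> linrel list \<Rightarrow> bool" where
  "hinge n Ps \<longleftrightarrow> Ps \<noteq> [] \<and> (\<forall>P\<in>set Ps. ndim_rel n P \<and> rk P > 0) \<and>
     (\<forall>j. Suc j < length Ps \<longrightarrow> Ker (Ps ! j) = Dom (Ps ! Suc j) \<and> Im (Ps ! j) = Indef (Ps ! Suc j)) \<and>
     Dom (hd Ps) = Vsp n \<and> Im (last Ps) = Vsp n"

text \<open>A = (c_0 lambda^0(P), ..., c_n lambda^n(P)); A m is the operator on Lambda^m V\<close>
definition hinge_tuple :: "nat \<Rightarrow> (nat \<Rightarrow> nat set \<Rightarrow> nat set \<Rightarrow> complex) \<Rightarrow> (nat \<Rightarrow> complex) \<Rightarrow> bool" where
  "hinge_tuple n A c \<longleftrightarrow> (\<exists>Ps. hinge n Ps \<and> (\<forall>m\<le>n. \<exists>L.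
      (\<exists>j<length Ps. lam_rel n m (Ps ! j) L) \<and> op_nonzero n m L \<and>
      (\<forall>I\<in>msub n m. \<forall>J\<in>msub n m. A m I J = c m * L I J)))"

definition nondeg_hinge_tuple :: "nat \<Rightarrow> (nat \<Rightarrow> nat set \<Rightarrow> nat set \<Rightarrow> complex) \<Rightarrow> bool" where
  "nondeg_hinge_tuple n A \<longleftrightarrow> (\<exists>c. hinge_tuple n A c \<and> (\<forall>m\<le>n. c m \<noteq> 0))"

text \<open>nu_1 >= ... >= nu_n >= 0 (values of nu outside 1..n are irrelevant); nu_{n+1} = 0\<close>
definition signature :: "nat \<Rightarrow> (nat \<Rightarrow> nat) \<Rightarrow> bool" where
  "signature n \<nu> \<longleftrightarrow> (\<forall>j. 1 \<le> j \<and> j < n \<longrightarrow> \<nu> (Suc j) \<le> \<nu> j)"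

definition mult :: "nat \<Rightarrow> (nat \<Rightarrow> nat) \<Rightarrow> nat \<Rightarrow> nat" where
  "mult n \<nu> j = \<nu> j - (if j < n then \<nu> (Suc j) else 0)"

text \<open>degrees of the tensor factors of h_nu = (x)_j (Lambda^j V)^(x)(nu_j - nu_{j+1})\<close>
definition degs :: "nat \<Rightarrow> (nat \<Rightarrow> nat) \<Rightarrow> nat list" where
  "degs n \<nu> = concat (map (\<lambda>j. replicate (mult n \<nu> j) j) [1..<Suc n])"

definition tidx :: "nat \<Rightarrow> nat list \<Rightarrow> nat set list set" where
  "tidx n ds = {Is. length Is = length ds \<and> (\<forall>k<length ds. Is ! k \<in> msub n (ds ! k))}"

definition tscl :: "complex \<Rightarrow> (nat set list \<Rightarrow> complex) \<Rightarrow> (nat set list \<Rightarrow> complex)" where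
  "tscl c x = (\<lambda>Is. c * x Is)"

definition rnu :: "nat \<Rightarrow> (nat \<Rightarrow> nat) \<Rightarrow> (nat \<Rightarrow> nat set \<Rightarrow> nat set \<Rightarrow> complex)
     \<Rightarrow> (nat set list \<Rightarrow> complex) \<Rightarrow> (nat set list \<Rightarrow> complex)" where
  "rnu n \<nu> A x = (\<lambda>Is. if Is \<in> tidx n (degs n \<nu>) then
      (\<Sum>Js\<in>tidx n (degs n \<nu>). (\<Prod>k<length (degs n \<nu>).
          A (degs n \<nu> ! k) (Is ! k) (Js ! k)) * x Js) else 0)"

text \<open>Xi_nu = (x)_j (e_1 /\ ... /\ e_j)^(x)(nu_j - nu_{j+1}) (0-based indices)\<close>
definition Xi :: "nat \<Rightarrow> (nat \<Rightarrow> nat) \<Rightarrow> nat set list \<Rightarrow> complex" where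
  "Xi n \<nu> = (\<lambda>Is. if Is = map (\<lambda>d. {..<d}) (degs n \<nu>) then 1 else 0)"

definition GL :: "nat \<Rightarrow> (nat \<Rightarrow> nat \<Rightarrow> complex) \<Rightarrow> bool" where
  "GL n g \<longleftrightarrow> det (mat n n (\<lambda>(r, c). g r c)) \<noteq> 0"

text \<open>lambda^m_cha(g): e_J = e_{j_1} /\ ... /\ e_{j_m} goes to g e_{j_1} /\ ... /\ g e_{j_m}\<close>
definition lam_cha :: "(nat \<Rightarrow> nat \<Rightarrow> complex) \<Rightarrow> nat \<Rightarrow> nat set \<Rightarrow> nat set \<Rightarrow> complex" where
  "lam_cha g m I J = wedge (\<lambda>k r. g r k) J I"

definition Hnu :: "nat \<Rightarrow> (nat \<Rightarrow> nat) \<Rightarrow> (nat set list \<Rightarrow> complex) set" where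
  "Hnu n \<nu> = module.span tscl {rnu n \<nu> (lam_cha g) (Xi n \<nu>) | g. GL n g}"

text \<open>rho_nu(A) = restriction of r_nu(A) to H_nu is nonzero\<close>
definition rho_nonzero :: "nat \<Rightarrow> (nat \<Rightarrow> nat) \<Rightarrow> (nat \<Rightarrow> nat set \<Rightarrow> nat set \<Rightarrow> complex) \<Rightarrow> bool" where
  "rho_nonzero n \<nu> A \<longleftrightarrow> (\<exists>h\<in>Hnu n \<nu>. rnu n \<nu> A h \<noteq> 0)"

end

theory Submission imports Defs begin

text \<open>Only the nonvanishing of every component \<open>A\<^sub>m\<close> matters. Fix nonzero entries
  \<open>A\<^sub>m(I\<^sub>m, J\<^sub>m)\<close>. For \<open>g \<in> GL\<^sub>n\<close> the vector \<open>r\<^sub>\<nu>(\<lambda>\<^sub>c\<^sub>h\<^sub>a(g)) \<Xi>\<^sub>\<nu> \<in> H\<^sub>\<nu>\<close> is a tensor product of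
  the decomposable vectors \<open>g e\<^sub>1 \<and> \<dots> \<and> g e\<^sub>m\<close>, so the coordinate of its image under \<open>r\<^sub>\<nu>(A)\<close>
  indexed by the \<open>I\<^sub>m\<close> is a product of the numbers \<open>\<phi>\<^sub>m(g) = (A\<^sub>m \<lambda>\<^sup>m(g))(I\<^sub>m, {1..m})\<close>.
  Each \<open>\<phi>\<^sub>m\<close> and \<open>det\<close> is a polynomial in the entries of \<open>g\<close> that does not vanish identically
  (\<open>\<phi>\<^sub>m(g) = A\<^sub>m(I\<^sub>m, J\<^sub>m)\<close> when the first \<open>m\<close> columns of \<open>g\<close> are the \<open>e\<^sub>j\<close>, \<open>j \<in> J\<^sub>m\<close>),
  so, \<open>\<complex>\<close> being infinite, a single \<open>g\<close> makes all of them nonzero.\<close>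

definition polyfun :: "(complex \<Rightarrow> complex) \<Rightarrow> bool" where
  "polyfun f \<longleftrightarrow> (\<exists>p. \<forall>t. f t = poly p t)"

lemma polyfun_const: "polyfun (\<lambda>t. c)"
  unfolding polyfun_def by (rule exI[of _ "[:c:]"]) auto

lemma polyfun_id: "polyfun (\<lambda>t. t)"
  unfolding polyfun_def by (rule exI[of _ "[:0, 1:]"]) auto

lemma polyfun_add: "polyfun f \<Longrightarrow> polyfun g \<Longrightarrow> polyfun (\<lambda>t. f t + g t)"
  unfolding polyfun_def by (metis poly_add)

lemma polyfun_diff: "polyfun f \<Longrightarrow> polyfun g \<Longrightarrow> polyfun (\<lambda>t. f t - g t)"
  unfolding polyfun_def by (metis poly_diff)

lemma polyfun_mult: "polyfun f \<Longrightarrow> polyfun g \<Longrightarrow> polyfun (\<lambda>t. f t * g t)"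
  unfolding polyfun_def by (metis poly_mult)

lemma polyfun_sum: "(\<And>x. x \<in> S \<Longrightarrow> polyfun (f x)) \<Longrightarrow> polyfun (\<lambda>t. \<Sum>x\<in>S. f x t)"
  by (induction S rule: infinite_finite_induct) (auto intro: polyfun_const polyfun_add)

lemma polyfun_prod: "(\<And>x. x \<in> S \<Longrightarrow> polyfun (f x)) \<Longrightarrow> polyfun (\<lambda>t. \<Prod>x\<in>S. f x t)"
  by (induction S rule: infinite_finite_induct) (auto intro: polyfun_const polyfun_mult)

lemma polyfun_finite_zeros:
  assumes "polyfun f" and "f a \<noteq> 0"
  shows "finite {t. f t = 0}"
proof -
  obtain p where "\<forall>t. f t = poly p t" using assms(1) unfolding polyfun_def by blast
  with assms(2) show ?thesis by (auto intro: poly_roots_finite)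
qed

lemma common_nonzero_point:
  fixes \<phi> :: "'k \<Rightarrow> 'a \<Rightarrow> complex" and \<gamma> :: "'a \<Rightarrow> 'a \<Rightarrow> complex \<Rightarrow> 'a"
  assumes "finite D"
    and \<gamma>0: "\<And>p q. \<gamma> p q 0 = p" and \<gamma>1: "\<And>p q. \<gamma> p q 1 = q"
    and polynomial: "\<And>k p q. k \<in> D \<Longrightarrow> polyfun (\<lambda>t. \<phi> k (\<gamma> p q t))"
    and nonzero: "\<And>k. k \<in> D \<Longrightarrow> \<exists>x. \<phi> k x \<noteq> 0"
  shows "\<exists>x. \<forall>k\<in>D. \<phi> k x \<noteq> 0"
  using assms(1) polynomial nonzero
proof (induction D rule: finite_induct)
  case empty
  then show ?case by simp
next
  case (insert k0 D)
  then obtain p where p: "\<forall>k\<in>D. \<phi> k p \<noteq> 0" by auto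
  obtain q where q: "\<phi> k0 q \<noteq> 0" using insert.prems(2) by blast
  have "finite {t. \<phi> k (\<gamma> p q t) = 0}" if "k \<in> insert k0 D" for k
  proof (cases "k = k0")
    case True
    then show ?thesis using q \<gamma>1 polyfun_finite_zeros[of _ 1] insert.prems(1) that by simp
  next
    case False
    then show ?thesis using p \<gamma>0 polyfun_finite_zeros[of _ 0] insert.prems(1) that by simp
  qed
  then have "finite (\<Union>k\<in>insert k0 D. {t. \<phi> k (\<gamma> p q t) = 0})"
    using insert.hyps(1) by blast
  then obtain t where "t \<notin> (\<Union>k\<in>insert k0 D. {t. \<phi> k (\<gamma> p q t) = 0})"
    by (metis ex_new_if_finite infinite_UNIV_char_0)
  then show ?case by blast
qed

definition mat_line :: "(nat \<Rightarrow> nat \<Rightarrow> complex) \<Rightarrow> (nat \<Rightarrow> nat \<Rightarrow> complex) \<Rightarrow> complex \<Rightarrow> nat \<Rightarrow> nat \<Rightarrow> complex" where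
  "mat_line p q t = (\<lambda>r c. (1 - t) * p r c + t * q r c)"

lemma mat_line_0: "mat_line p q 0 = p" and mat_line_1: "mat_line p q 1 = q"
  by (auto simp: mat_line_def)

lemma polyfun_mat_line: "polyfun (\<lambda>t. mat_line p q t r c)"
  unfolding mat_line_def
  by (intro polyfun_add polyfun_mult polyfun_diff polyfun_const polyfun_id)

lemma det_mat_eq_sum_permutations:
  "det (mat d d (\<lambda>(i, j). M i j)) = (\<Sum>p | p permutes {0..<d}. signof p * (\<Prod>i = 0..<d. M i (p i)))"
  by (subst det_def'[of _ d]) (auto intro!: sum.cong prod.cong simp: permutes_in_image)

lemma polyfun_det:
  assumes "\<And>i j. i < d \<Longrightarrow> j < d \<Longrightarrow> polyfun (\<lambda>t. M t i j)"
  shows "polyfun (\<lambda>t. det (mat d d (\<lambda>(i, j). M t i j)))"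
  unfolding det_mat_eq_sum_permutations
  by (intro polyfun_sum polyfun_mult polyfun_const polyfun_prod assms)
     (auto simp: permutes_in_image)

lemma det_zero_column:
  assumes "c < d" and "\<And>r. r < d \<Longrightarrow> M r c = 0"
  shows "det (mat d d (\<lambda>(i, j). M i j)) = (0::complex)"
proof -
  have "\<exists>i\<in>{0..<d}. M i (p i) = 0" if p: "p permutes {0..<d}" for p
  proof
    show "inv_into UNIV p c \<in> {0..<d}"
      using p assms(1) by (simp add: permutes_inv permutes_in_image)
    show "M (inv_into UNIV p c) (p (inv_into UNIV p c)) = 0"
      using p assms by (simp add: permutes_inv permutes_in_image permutes_inverses(1))
  qed
  then show ?thesis unfolding det_mat_eq_sum_permutations by (simp add: prod_zero)
qed

lemma finite_msub: "finite (msub n m)"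
  by (rule finite_subset[of _ "Pow {..<n}"]) (auto simp: msub_def)

lemma lessThan_in_msub: "m \<le> n \<Longrightarrow> {..<m} \<in> msub n m"
  by (auto simp: msub_def)

text \<open>The coordinates of \<open>g e\<^sub>1 \<and> \<dots> \<and> g e\<^sub>m\<close> are the maximal minors of the first \<open>m\<close> columns of \<open>g\<close>.\<close>
lemma lam_cha_lessThan:
  "lam_cha g m K {..<m} = det (mat m m (\<lambda>(r, c). g (sorted_list_of_set K ! r) c))"
  unfolding lam_cha_def wedge_def
  by (auto simp: atLeast0LessThan[symmetric] intro!: arg_cong[where f = det] eq_matI)

definition col_select :: "nat set \<Rightarrow> nat \<Rightarrow> nat \<Rightarrow> nat \<Rightarrow> complex" where
  "col_select J m = (\<lambda>r c. if c < m \<and> r = sorted_list_of_set J ! c then 1 else 0)"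

lemma lam_cha_col_select:
  assumes K: "K \<in> msub n m" and J: "J \<in> msub n m"
  shows "lam_cha (col_select J m) m K {..<m} = (if K = J then 1 else 0)"
proof -
  have K_fin: "finite K" "card K = m" and J_fin: "finite J" "card J = m"
    using K J finite_subset[of _ "{..<n}"] unfolding msub_def by auto
  show ?thesis
  proof (cases "K = J")
    case True
    then have "mat m m (\<lambda>(r, c). col_select J m (sorted_list_of_set K ! r) c) = 1\<^sub>m m"
      using K_fin by (intro eq_matI) (auto simp: col_select_def nth_eq_iff_index_eq)
    then show ?thesis using True by (simp add: lam_cha_lessThan)
  next
    case False
    then have "\<not> J \<subseteq> K" using K_fin J_fin card_subset_eq by metis
    then obtain c where c: "c < m" "sorted_list_of_set J ! c \<notin> K"
      using J_fin by (metis in_set_conv_nth length_sorted_list_of_set set_sorted_list_of_set subsetI)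
    have "sorted_list_of_set K ! r \<noteq> sorted_list_of_set J ! c" if "r < m" for r
      using K_fin c(2) that by (metis nth_mem length_sorted_list_of_set set_sorted_list_of_set)
    then have "col_select J m (sorted_list_of_set K ! r) c = 0" if "r < m" for r
      using that by (simp add: col_select_def)
    then have "det (mat m m (\<lambda>(r, c). col_select J m (sorted_list_of_set K ! r) c)) = 0"
      by (rule det_zero_column[OF c(1)])
    then show ?thesis using False by (simp add: lam_cha_lessThan)
  qed
qed

lemma opapp_lam_cha_col_select:
  assumes "J \<in> msub n m"
  shows "opapp n m L (\<lambda>K. lam_cha (col_select J m) m K {..<m}) I = L I J"
proof -
  have "opapp n m L (\<lambda>K. lam_cha (col_select J m) m K {..<m}) I
      = (\<Sum>K\<in>msub n m. if K = J then L I K else 0)"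
    unfolding opapp_def by (rule sum.cong) (auto simp: lam_cha_col_select assms)
  then show ?thesis using assms finite_msub by (simp add: sum.delta')
qed

lemma polyfun_opapp_lam_cha_mat_line:
  "polyfun (\<lambda>t. opapp n m L (\<lambda>K. lam_cha (mat_line p q t) m K {..<m}) I)"
  unfolding opapp_def lam_cha_lessThan
  by (intro polyfun_sum polyfun_mult polyfun_const polyfun_det polyfun_mat_line)

lemma exists_GL_opapp_lam_cha_nonzero:
  assumes "\<And>m. m \<le> n \<Longrightarrow> J m \<in> msub n m \<and> L m (I m) (J m) \<noteq> 0"
  shows "\<exists>g. GL n g \<and> (\<forall>m\<le>n. opapp n m (L m) (\<lambda>K. lam_cha g m K {..<m}) (I m) \<noteq> 0)"
proof -
  define \<phi> where "\<phi> k g = (case k of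
      None \<Rightarrow> det (mat n n (\<lambda>(r, c). g r c))
    | Some m \<Rightarrow> opapp n m (L m) (\<lambda>K. lam_cha g m K {..<m}) (I m))" for k g
  have "\<exists>g. \<forall>k\<in>insert None (Some ` {..n}). \<phi> k g \<noteq> 0"
  proof (rule common_nonzero_point[where \<gamma> = mat_line])
    fix k p q
    show "polyfun (\<lambda>t. \<phi> k (mat_line p q t))"
      unfolding \<phi>_def
      by (cases k) (simp_all add: polyfun_det polyfun_mat_line polyfun_opapp_lam_cha_mat_line)
  next
    fix k assume "k \<in> insert None (Some ` {..n})"
    then consider "k = None" | m where "k = Some m" "m \<le> n" by blast
    then show "\<exists>g. \<phi> k g \<noteq> 0"
    proof cases
      case 1
      have "mat n n (\<lambda>(r, c). if r = c then 1 else 0) = (1\<^sub>m n :: complex mat)"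
        by (intro eq_matI) auto
      then show ?thesis using 1 unfolding \<phi>_def by (intro exI[of _ "\<lambda>r c. if r = c then 1 else 0"]) simp
    next
      case 2
      then show ?thesis using assms[of m] unfolding \<phi>_def
        by (intro exI[of _ "col_select (J m) m"]) (simp add: opapp_lam_cha_col_select)
    qed
  qed (simp_all add: mat_line_0 mat_line_1)
  then show ?thesis unfolding \<phi>_def GL_def by auto
qed

lemma tidx_Nil: "tidx n [] = {[]}"
  unfolding tidx_def by auto

lemma tidx_Cons: "tidx n (d # ds) = (\<lambda>(K, Ks). K # Ks) ` (msub n d \<times> tidx n ds)"
proof safe
  fix Is assume "Is \<in> tidx n (d # ds)"
  then obtain K Ks where Is: "Is = K # Ks" and "length Ks = length ds"
    and entries: "\<forall>k<Suc (length ds). Is ! k \<in> msub n ((d # ds) ! k)"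
    unfolding tidx_def by (auto simp: length_Suc_conv)
  moreover have "K \<in> msub n d" using entries[rule_format, of 0] Is by simp
  ultimately show "Is \<in> (\<lambda>(K, Ks). K # Ks) ` (msub n d \<times> tidx n ds)"
    unfolding tidx_def by force
next
  fix K Ks assume "K \<in> msub n d" "Ks \<in> tidx n ds"
  then show "K # Ks \<in> tidx n (d # ds)"
    unfolding tidx_def by (auto simp: nth_Cons split: nat.splits)
qed

lemma finite_tidx: "finite (tidx n ds)"
  by (induction ds) (simp_all add: tidx_Nil tidx_Cons finite_msub)

lemma sum_tidx_prod:
  fixes f :: "nat \<Rightarrow> nat set \<Rightarrow> 'a::comm_semiring_1"
  shows "(\<Sum>Ks\<in>tidx n ds. \<Prod>k<length ds. f k (Ks ! k)) = (\<Prod>k<length ds. \<Sum>K\<in>msub n (ds ! k). f k K)"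
proof (induction ds arbitrary: f)
  case Nil
  then show ?case by (simp add: tidx_Nil)
next
  case (Cons d ds)
  have inj: "inj_on (\<lambda>(K, Ks). K # Ks) (msub n d \<times> tidx n ds)"
    by (auto simp: inj_on_def)
  have "(\<Sum>Ks\<in>tidx n (d # ds). \<Prod>k<length (d # ds). f k (Ks ! k))
      = (\<Sum>(K, Ks)\<in>msub n d \<times> tidx n ds. f 0 K * (\<Prod>k<length ds. f (Suc k) (Ks ! k)))"
    unfolding tidx_Cons sum.reindex[OF inj] length_Cons prod.lessThan_Suc_shift
    by (simp add: case_prod_unfold)
  also have "\<dots> = (\<Sum>K\<in>msub n d. f 0 K) * (\<Sum>Ks\<in>tidx n ds. \<Prod>k<length ds. f (Suc k) (Ks ! k))"
    unfolding sum_product sum.cartesian_product ..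
  also have "\<dots> = (\<Prod>k<length (d # ds). \<Sum>K\<in>msub n ((d # ds) ! k). f k K)"
    unfolding Cons.IH[of "\<lambda>k. f (Suc k)"] length_Cons prod.lessThan_Suc_shift by simp
  finally show ?case .
qed

lemma degs_le: "d \<in> set (degs n \<nu>) \<Longrightarrow> d \<le> n"
  by (auto simp: degs_def)

lemma map_in_tidx_degs:
  assumes "\<And>m. m \<le> n \<Longrightarrow> I m \<in> msub n m"
  shows "map I (degs n \<nu>) \<in> tidx n (degs n \<nu>)"
  unfolding tidx_def using assms degs_le[OF nth_mem] by auto

lemma rnu_Xi:
  assumes "Ks \<in> tidx n (degs n \<nu>)"
  shows "rnu n \<nu> B (Xi n \<nu>) Ks = (\<Prod>k<length (degs n \<nu>). B (degs n \<nu> ! k) (Ks ! k) {..<degs n \<nu> ! k})"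
proof -
  let ?ds = "degs n \<nu>"
  let ?first = "map (\<lambda>d. {..<d}) ?ds"
  have "?first \<in> tidx n ?ds"
    using map_in_tidx_degs[of n "\<lambda>d. {..<d}"] by (simp add: lessThan_in_msub)
  then show ?thesis
    using assms finite_tidx unfolding rnu_def Xi_def by (simp add: if_distrib sum.delta' cong: if_cong)
qed

lemma rnu_rnu_Xi:
  assumes "Is \<in> tidx n (degs n \<nu>)"
  shows "rnu n \<nu> A (rnu n \<nu> B (Xi n \<nu>)) Is
    = (\<Prod>k<length (degs n \<nu>). opapp n (degs n \<nu> ! k) (A (degs n \<nu> ! k))
        (\<lambda>K. B (degs n \<nu> ! k) K {..<degs n \<nu> ! k}) (Is ! k))"
proof -
  let ?ds = "degs n \<nu>"
  have "rnu n \<nu> A (rnu n \<nu> B (Xi n \<nu>)) Is = (\<Sum>Ks\<in>tidx n ?ds. \<Prod>k<length ?ds.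
      A (?ds ! k) (Is ! k) (Ks ! k) * B (?ds ! k) (Ks ! k) {..<?ds ! k})"
    using assms unfolding rnu_def[of n \<nu> A] by (auto simp: rnu_Xi prod.distrib intro!: sum.cong)
  also have "\<dots> = (\<Prod>k<length ?ds. \<Sum>K\<in>msub n (?ds ! k).
      A (?ds ! k) (Is ! k) K * B (?ds ! k) K {..<?ds ! k})"
    by (rule sum_tidx_prod)
  finally show ?thesis unfolding opapp_def .
qed

lemma module_tscl: "Modules.module tscl"
  by unfold_locales (auto simp: tscl_def algebra_simps fun_eq_iff)

lemma rnu_lam_cha_Xi_in_Hnu: "GL n g \<Longrightarrow> rnu n \<nu> (lam_cha g) (Xi n \<nu>) \<in> Hnu n \<nu>"
  unfolding Hnu_def by (rule module.span_base[OF module_tscl]) blast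

theorem rho_nonzero_if_op_nonzero:
  assumes "\<And>m. m \<le> n \<Longrightarrow> op_nonzero n m (A m)"
  shows "rho_nonzero n \<nu> A"
proof -
  obtain I J where IJ: "\<And>m. m \<le> n \<Longrightarrow> I m \<in> msub n m \<and> J m \<in> msub n m \<and> A m (I m) (J m) \<noteq> 0"
    using assms unfolding op_nonzero_def by metis
  then obtain g where g: "GL n g" "\<forall>m\<le>n. opapp n m (A m) (\<lambda>K. lam_cha g m K {..<m}) (I m) \<noteq> 0"
    using exists_GL_opapp_lam_cha_nonzero[of n J A I] by blast
  let ?ds = "degs n \<nu>"
  have Is: "map I ?ds \<in> tidx n ?ds"
    using IJ by (intro map_in_tidx_degs) blast
  have "rnu n \<nu> A (rnu n \<nu> (lam_cha g) (Xi n \<nu>)) (map I ?ds) \<noteq> 0"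
    unfolding rnu_rnu_Xi[OF Is] using g(2) degs_le[OF nth_mem] by simp
  then show ?thesis
    unfolding rho_nonzero_def using rnu_lam_cha_Xi_in_Hnu[OF g(1)] by force
qed

lemma op_nonzero_if_nondeg_hinge_tuple:
  assumes "nondeg_hinge_tuple n A" and "m \<le> n"
  shows "op_nonzero n m (A m)"
proof -
  obtain c where c: "hinge_tuple n A c" "c m \<noteq> 0"
    using assms unfolding nondeg_hinge_tuple_def by blast
  then obtain L where "op_nonzero n m L" "\<forall>I\<in>msub n m. \<forall>J\<in>msub n m. A m I J = c m * L I J"
    using assms(2) unfolding hinge_tuple_def by blast
  with c(2) show ?thesis unfolding op_nonzero_def by auto
qed

theorem corollary2p15:
  fixes n :: nat and \<nu> :: "nat \<Rightarrow> nat" and A :: "nat \<Rightarrow> nat set \<Rightarrow> nat set \<Rightarrow> complex"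
  assumes "signature n \<nu>"
    and "nondeg_hinge_tuple n A"
  shows "rho_nonzero n \<nu> A"
  using assms(2) by (intro rho_nonzero_if_op_nonzero op_nonzero_if_nondeg_hinge_tuple)

end
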